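(* Let $(\mathcal S,\mathcal A,H,P,R,\mu)$ be an episodic tabular MDP as in the context. Suppose the actions do not affect the transitions, i.e., $P_h(s'\mid s,a)=P_h(s'\mid s)$ for all $h,s,a,s'$. Then $CR^L(P)=\frac1A$ for every $L\in[H]$.
   Context: Episodic tabular MDP $(\mathcal S,\mathcal A,H,P,R,\mu)$: finite state space $\mathcal S$ with $|\mathcal S|=S$, finite action space $\mathcal A$ with $|\mathcal A|=A$, horizon $H\in\mathbb N$, transition kernels $P_h(\cdot\mid s,a)$, initial state distribution $\mu$, and random non-negative rewards $R_h(s,a)$ for $(h,s,a)\in\mathcal X:=[H]\times\mathcal S\times\mathcal A$. Initially $s_1\sim\mu$; at step $h$ the agent in state $s_h$ picks $a_h$, receives $R_h(s_h,a_h)$ and moves to $s_{h+1}\sim P_h(\cdot\mid s_h,a_h)$. All rewards are drawn before the interaction. The vectors $\mathcal R_h=\{R_h(s,a)\}_{s,a}$ for different $h$ are mutually independent (entries of one $\mathcal R_h$ may be arbitrarily correlated); rewards are independent of transitions, and transitions are independent across steps. Let $r_h(s,a)=\mathbb E[R_h(s,a)]$ and let $\mathcal D(r)$ denote the set of all such reward distributions with means $r$. For $L\in\{0,\dots,H\}$ an $L$-lookahead policy draws $a_h\sim\pi_h(\cdot\mid s_h,\mathcal R_h^L)$, where $\mathcal R_h^L=(\mathcal R_t)_{h\le t\le\min(h+L-1,H)}$ and $\mathcal R_h^0=\emptyset$; $\Pi^L$ is the set of these policies. The value is $V^{L,\pi}(P,r)=\mathbb E[\sum_{h=1}^H R_h(s_h,a_h)]$,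 and $V^{L,*}(P,r)=\sup_{\pi\in\Pi^L}V^{L,\pi}(P,r)$. The competitive ratio is $CR^L(P,r)=\inf_{\mathcal D(r)}V^{0,*}(P,r)/V^{L,*}(P,r)$, with the convention that any division by zero equals $+\infty$. Also $CR^L(P)=\inf\{CR^L(P,r): r_h\in[0,1]^{SA}\ \forall h\}$. *)

theory Defs
  imports "HOL-Probability.Probability"
begin

text \<open>Steps are indexed by h in {1..H}. A reward vector for one step is a function
  ('s \<times> 'a \<Rightarrow> real); its distribution is a probability measure on the
  product measurable space rew_space. The full reward realisation is
  omega :: nat \<Rightarrow> ('s \<times> 'a \<Rightarrow> real), drawn from the product of the per-step
  distributions (independence across steps, arbitrary correlation within a step).\<close>

definition rew_space :: "('s \<times> 'a \<Rightarrow> real) measure" where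
  "rew_space = PiM UNIV (\<lambda>_. borel)"

definition win :: "nat \<Rightarrow> nat \<Rightarrow> nat \<Rightarrow> nat set" where
  "win L H h = {h..<h+L} \<inter> {1..H}"

definition reward_dists ::
  "nat \<Rightarrow> (nat \<Rightarrow> 's \<times> 'a \<Rightarrow> real) \<Rightarrow> (nat \<Rightarrow> ('s \<times> 'a \<Rightarrow> real) measure) set" where
  "reward_dists H r = {D. \<forall>h\<in>{1..H}.
      prob_space (D h) \<and> sets (D h) = sets rew_space \<and>
      (AE \<rho> in D h. \<forall>x. 0 \<le> \<rho> x) \<and>
      (\<forall>x. integrable (D h) (\<lambda>\<rho>. \<rho> x) \<and> (\<integral>\<rho>. \<rho> x \<partial>D h) = r h x)}"

text \<open>An L-lookahead (randomised, Markov) policy: pi h s w a is the probability of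
  choosing action a at step h in state s when the observed lookahead rewards are w
  (w is the reward realisation restricted to the window win L H h).\<close>
type_synonym ('s, 'a) policy = "nat \<Rightarrow> 's \<Rightarrow> (nat \<Rightarrow> 's \<times> 'a \<Rightarrow> real) \<Rightarrow> 'a \<Rightarrow> real"

definition is_policy :: "nat \<Rightarrow> nat \<Rightarrow> ('s, 'a::finite) policy \<Rightarrow> bool" where
  "is_policy L H \<pi> \<longleftrightarrow> (\<forall>h\<in>{1..H}. \<forall>s.
      (\<forall>w a. 0 \<le> \<pi> h s w a) \<and> (\<forall>w. (\<Sum>a\<in>UNIV. \<pi> h s w a) = 1) \<and>
      (\<forall>a. (\<lambda>w. \<pi> h s w a) \<in> borel_measurable (PiM (win L H h) (\<lambda>_. rew_space))))"

text \<open>Given the full reward realisation omega, sdist k is the state distribution at step k+1.\<close>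
primrec sdist :: "nat \<Rightarrow> nat \<Rightarrow> ('s::finite \<Rightarrow> real) \<Rightarrow> (nat \<Rightarrow> 's \<Rightarrow> 'a::finite \<Rightarrow> 's \<Rightarrow> real)
    \<Rightarrow> ('s, 'a) policy \<Rightarrow> (nat \<Rightarrow> 's \<times> 'a \<Rightarrow> real) \<Rightarrow> nat \<Rightarrow> 's \<Rightarrow> real" where
  "sdist L H \<mu> P \<pi> \<omega> 0 = \<mu>"
| "sdist L H \<mu> P \<pi> \<omega> (Suc k) = (\<lambda>s'. \<Sum>s\<in>UNIV. \<Sum>a\<in>UNIV.
      sdist L H \<mu> P \<pi> \<omega> k s * \<pi> (Suc k) s (restrict \<omega> (win L H (Suc k))) a * P (Suc k) s a s')"

definition cond_value :: "nat \<Rightarrow> nat \<Rightarrow> ('s::finite \<Rightarrow> real) \<Rightarrow> (nat \<Rightarrow> 's \<Rightarrow> 'a::finite \<Rightarrow> 's \<Rightarrow> real)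
    \<Rightarrow> ('s, 'a) policy \<Rightarrow> (nat \<Rightarrow> 's \<times> 'a \<Rightarrow> real) \<Rightarrow> real" where
  "cond_value L H \<mu> P \<pi> \<omega> = (\<Sum>h\<in>{1..H}. \<Sum>s\<in>UNIV. \<Sum>a\<in>UNIV.
      sdist L H \<mu> P \<pi> \<omega> (h - 1) s * \<pi> h s (restrict \<omega> (win L H h)) a * \<omega> h (s, a))"

definition policy_value :: "nat \<Rightarrow> nat \<Rightarrow> ('s::finite \<Rightarrow> real) \<Rightarrow> (nat \<Rightarrow> 's \<Rightarrow> 'a::finite \<Rightarrow> 's \<Rightarrow> real)
    \<Rightarrow> (nat \<Rightarrow> ('s \<times> 'a \<Rightarrow> real) measure) \<Rightarrow> ('s, 'a) policy \<Rightarrow> real" where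
  "policy_value L H \<mu> P D \<pi> = (\<integral>\<omega>. cond_value L H \<mu> P \<pi> \<omega> \<partial>(PiM {1..H} D))"

definition opt_value :: "nat \<Rightarrow> nat \<Rightarrow> ('s::finite \<Rightarrow> real) \<Rightarrow> (nat \<Rightarrow> 's \<Rightarrow> 'a::finite \<Rightarrow> 's \<Rightarrow> real)
    \<Rightarrow> (nat \<Rightarrow> ('s \<times> 'a \<Rightarrow> real) measure) \<Rightarrow> ereal" where
  "opt_value L H \<mu> P D = (SUP \<pi>\<in>{\<pi>. is_policy L H \<pi>}. ereal (policy_value L H \<mu> P D \<pi>))"

definition cr_div :: "ereal \<Rightarrow> ereal \<Rightarrow> ereal" where
  "cr_div x y = (if y = 0 then \<infinity> else x / y)"

definition CR_r :: "nat \<Rightarrow> nat \<Rightarrow> ('s::finite \<Rightarrow> real) \<Rightarrow> (nat \<Rightarrow> 's \<Rightarrow> 'a::finite \<Rightarrow> 's \<Rightarrow> real)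
    \<Rightarrow> (nat \<Rightarrow> 's \<times> 'a \<Rightarrow> real) \<Rightarrow> ereal" where
  "CR_r L H \<mu> P r = (INF D\<in>reward_dists H r. cr_div (opt_value 0 H \<mu> P D) (opt_value L H \<mu> P D))"

definition CR :: "nat \<Rightarrow> nat \<Rightarrow> ('s::finite \<Rightarrow> real) \<Rightarrow> (nat \<Rightarrow> 's \<Rightarrow> 'a::finite \<Rightarrow> 's \<Rightarrow> real) \<Rightarrow> ereal" where
  "CR L H \<mu> P = (INF r\<in>{r. \<forall>h\<in>{1..H}. \<forall>x. 0 \<le> r h x \<and> r h x \<le> 1}. CR_r L H \<mu> P r)"

end

theory Submission
  imports Defs
begin

text \<open>When actions do not influence transitions, the state distribution q at every step is the
  same for all policies. A policy without lookahead thus earns the q-weighted mean reward of the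
  actions it picks, and the greedy one earns G, the q-weighted maximal mean reward. A policy with
  lookahead earns at most the q-weighted sum of the mean rewards of all actions, which is at most
  A G; hence the ratio is at least 1/A. It equals 1/A for one-hot rewards, where at every step a
  uniformly random action pays 1 and the others 0: without lookahead every policy earns H/A,
  while a lookahead of one step reveals the paying action and earns H.\<close>

lemma reward_distsD:
  assumes "D \<in> reward_dists H r" and "h \<in> {1..H}"
  shows "prob_space (D h)" "sets (D h) = sets rew_space"
    "AE \<rho> in D h. \<forall>x. 0 \<le> \<rho> x" "integrable (D h) (\<lambda>\<rho>. \<rho> x)" "(\<integral>\<rho>. \<rho> x \<partial>D h) = r h x"
  using assms unfolding reward_dists_def by (auto simp del: split_paired_All)

lemma measurable_rew_space_coord [measurable]: "(\<lambda>\<rho>. \<rho> x) \<in> borel_measurable rew_space"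
  unfolding rew_space_def by (rule measurable_component_singleton) simp

lemma space_rew_space [simp]: "space rew_space = UNIV"
  unfolding rew_space_def by (simp add: space_PiM)

lemma measurable_reward_coord:
  assumes "D \<in> reward_dists H r" and "h \<in> {1..H}"
  shows "(\<lambda>\<rho>. \<rho> x) \<in> borel_measurable (D h)"
  using measurable_rew_space_coord reward_distsD(2)[OF assms] measurable_cong_sets by blast

lemma measurable_reward_component:
  assumes "D \<in> reward_dists H r" and "h \<in> {1..H}"
  shows "(\<lambda>\<omega>. \<omega> h x) \<in> borel_measurable (PiM {1..H} D)"
  using measurable_comp[OF measurable_component_singleton[OF assms(2), of D]
      measurable_reward_coord[OF assms]]
  by (simp add: comp_def)

lemma
  assumes D: "D \<in> reward_dists H r" and h: "h \<in> {1..H}"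
  shows AE_reward_component_nonneg: "AE \<omega> in PiM {1..H} D. \<forall>x. 0 \<le> \<omega> h x"
    and integrable_reward_component: "integrable (PiM {1..H} D) (\<lambda>\<omega>. \<omega> h x)"
    and integral_reward_component: "(\<integral>\<omega>. \<omega> h x \<partial>PiM {1..H} D) = r h x"
proof -
  have prob: "\<And>i. i \<in> {1..H} \<Longrightarrow> prob_space (D i)"
    using reward_distsD(1)[OF D] by blast
  have proj: "(\<lambda>\<omega>. \<omega> h) \<in> measurable (PiM {1..H} D) (D h)"
    by (rule measurable_component_singleton[OF h])
  have distr_proj: "distr (PiM {1..H} D) (D h) (\<lambda>\<omega>. \<omega> h) = D h"
    by (rule distr_PiM_component[OF prob h])
  show "AE \<omega> in PiM {1..H} D. \<forall>x. 0 \<le> \<omega> h x"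
    by (rule AE_PiM_component[of "{1..H}" D h, OF prob h reward_distsD(3)[OF D h]])
  show "integrable (PiM {1..H} D) (\<lambda>\<omega>. \<omega> h x)"
    using integrable_distr_eq[OF proj measurable_reward_coord[OF D h]] distr_proj
      reward_distsD(4)[OF D h]
    by simp
  show "(\<integral>\<omega>. \<omega> h x \<partial>PiM {1..H} D) = r h x"
    using integral_distr[OF proj measurable_reward_coord[OF D h]] distr_proj
      reward_distsD(5)[OF D h]
    by simp
qed

lemma
  fixes c :: "nat \<Rightarrow> 's::finite \<Rightarrow> 'a::finite \<Rightarrow> real"
  assumes D: "D \<in> reward_dists H r"
  shows integrable_linear_reward:
      "integrable (PiM {1..H} D) (\<lambda>\<omega>. \<Sum>h\<in>{1..H}. \<Sum>s\<in>UNIV. \<Sum>a\<in>UNIV. c h s a * \<omega> h (s, a))"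
    and integral_linear_reward:
      "(\<integral>\<omega>. (\<Sum>h\<in>{1..H}. \<Sum>s\<in>UNIV. \<Sum>a\<in>UNIV. c h s a * \<omega> h (s, a)) \<partial>PiM {1..H} D)
        = (\<Sum>h\<in>{1..H}. \<Sum>s\<in>UNIV. \<Sum>a\<in>UNIV. c h s a * r h (s, a))"
proof -
  have term_integrable: "integrable (PiM {1..H} D) (\<lambda>\<omega>. c h s a * \<omega> h (s, a))"
    if "h \<in> {1..H}" for h s a
    using integrable_reward_component[OF D that] by simp
  then show "integrable (PiM {1..H} D) (\<lambda>\<omega>. \<Sum>h\<in>{1..H}. \<Sum>s\<in>UNIV. \<Sum>a\<in>UNIV. c h s a * \<omega> h (s, a))"
    by (intro Bochner_Integration.integrable_sum)
  have "(\<integral>\<omega>. (\<Sum>h\<in>{1..H}. \<Sum>s\<in>UNIV. \<Sum>a\<in>UNIV. c h s a * \<omega> h (s, a)) \<partial>PiM {1..H} D)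
      = (\<Sum>h\<in>{1..H}. \<Sum>s\<in>UNIV. \<Sum>a\<in>UNIV. (\<integral>\<omega>. c h s a * \<omega> h (s, a) \<partial>PiM {1..H} D))"
    using term_integrable
    by (simp add: Bochner_Integration.integral_sum Bochner_Integration.integrable_sum)
  also have "\<dots> = (\<Sum>h\<in>{1..H}. \<Sum>s\<in>UNIV. \<Sum>a\<in>UNIV. c h s a * r h (s, a))"
    using integral_reward_component[OF D] by (intro sum.cong refl) simp
  finally show "(\<integral>\<omega>. (\<Sum>h\<in>{1..H}. \<Sum>s\<in>UNIV. \<Sum>a\<in>UNIV. c h s a * \<omega> h (s, a)) \<partial>PiM {1..H} D)
      = (\<Sum>h\<in>{1..H}. \<Sum>s\<in>UNIV. \<Sum>a\<in>UNIV. c h s a * r h (s, a))" .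
qed

lemma
  assumes "is_policy L H \<pi>" and "h \<in> {1..H}"
  shows policy_le_1: "\<pi> h s w a \<le> 1"
    and sum_policy: "(\<Sum>a\<in>UNIV. \<pi> h s w a) = 1"
proof -
  have nonneg: "\<forall>a. 0 \<le> \<pi> h s w a" and sum: "(\<Sum>a\<in>UNIV. \<pi> h s w a) = 1"
    using assms unfolding is_policy_def by auto
  show "(\<Sum>a\<in>UNIV. \<pi> h s w a) = 1"
    using sum by simp
  show "\<pi> h s w a \<le> 1"
    using member_le_sum[of a UNIV "\<pi> h s w"] nonneg sum by simp
qed

definition det_policy :: "(nat \<Rightarrow> 's \<Rightarrow> 'a) \<Rightarrow> ('s, 'a) policy" where
  "det_policy g h s w a = (if a = g h s then 1 else 0)"

lemma is_policy_det_policy: "is_policy L H (det_policy (g :: nat \<Rightarrow> 's \<Rightarrow> 'a::finite))"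
  unfolding is_policy_def det_policy_def by auto

lemma cr_div_ge_inverse:
  fixes A M :: real and V0 VL :: ereal
  assumes A: "0 < A" and M: "0 \<le> M" and V0: "ereal M \<le> V0"
    and VL: "0 \<le> VL" "VL \<le> ereal (A * M)"
  shows "ereal (1 / A) \<le> cr_div V0 VL"
proof (cases "VL = 0")
  case True
  then show ?thesis by (simp add: cr_div_def)
next
  case False
  with VL obtain v where v: "VL = ereal v" "0 < v" "v \<le> A * M"
    by (cases VL) auto
  show ?thesis
  proof (cases V0)
    case (real u)
    have "v \<le> A * u"
      using v(3) V0 real A by (auto intro: order_trans mult_left_mono)
    then have "1 / A \<le> u / v"
      using A v(2) by (simp add: field_simps)
    then show ?thesis using False v real by (simp add: cr_div_def)
  next
    case PInf
    then show ?thesis using False v by (simp add: cr_div_def)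
  next
    case MInf
    then show ?thesis using V0 by simp
  qed
qed

lemma cr_div_le_inverse:
  fixes A X :: real and V0 VL :: ereal
  assumes A: "0 < A" and X: "0 < X" and V0: "0 \<le> V0" "V0 \<le> ereal (X / A)"
    and VL: "ereal X \<le> VL"
  shows "cr_div V0 VL \<le> ereal (1 / A)"
proof -
  obtain u where u: "V0 = ereal u" "0 \<le> u" "u \<le> X / A"
    using V0 by (cases V0) auto
  have VL_pos: "VL \<noteq> 0" using VL X by auto
  show ?thesis
  proof (cases VL)
    case (real v)
    have "u / v \<le> u / X"
      using VL real X u(2) by (intro divide_left_mono) auto
    also have "\<dots> \<le> 1 / A"
      using u(3) X by (simp add: field_simps)
    finally show ?thesis using u real VL_pos by (simp add: cr_div_def)
  next
    case PInf
    then show ?thesis using u A by (simp add: cr_div_def)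
  next
    case MInf
    then show ?thesis using VL by simp
  qed
qed

section \<open>Action-independent transitions\<close>

text \<open>Under action independence the action fed to the kernel is irrelevant; \<open>undefined\<close>
  stands for an arbitrary one.\<close>

primrec state_marginal ::
    "('s::finite \<Rightarrow> real) \<Rightarrow> (nat \<Rightarrow> 's \<Rightarrow> 'a \<Rightarrow> 's \<Rightarrow> real) \<Rightarrow> nat \<Rightarrow> 's \<Rightarrow> real" where
  "state_marginal \<mu> P 0 = \<mu>"
| "state_marginal \<mu> P (Suc k) =
    (\<lambda>s'. \<Sum>s\<in>UNIV. state_marginal \<mu> P k s * P (Suc k) s undefined s')"

locale action_independent_mdp =
  fixes \<mu> :: "'s::finite \<Rightarrow> real" and P :: "nat \<Rightarrow> 's \<Rightarrow> 'a::finite \<Rightarrow> 's \<Rightarrow> real" and H :: nat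
  assumes mu_dist: "(\<forall>s. 0 \<le> \<mu> s) \<and> (\<Sum>s\<in>UNIV. \<mu> s) = 1"
    and P_dist: "\<forall>h\<in>{1..H}. \<forall>s a. (\<forall>s'. 0 \<le> P h s a s') \<and> (\<Sum>s'\<in>UNIV. P h s a s') = 1"
    and P_action_indep: "\<forall>h\<in>{1..H}. \<forall>s a a' s'. P h s a s' = P h s a' s'"
begin

abbreviation q :: "nat \<Rightarrow> 's \<Rightarrow> real" where
  "q \<equiv> state_marginal \<mu> P"

lemma sdist_eq_state_marginal:
  assumes "is_policy L H \<pi>"
  shows "k < H \<Longrightarrow> sdist L H \<mu> P \<pi> \<omega> k = q k"
proof (induction k)
  case 0
  then show ?case by simp
next
  case (Suc k)
  have h: "Suc k \<in> {1..H}" using Suc.prems by auto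
  let ?w = "restrict \<omega> (win L H (Suc k))"
  define K where "K s s' = P (Suc k) s undefined s'" for s s'
  have P_eq: "P (Suc k) s a s' = K s s'" for s a s'
    using P_action_indep h unfolding K_def by blast
  show ?case
  proof
    fix s'
    have "sdist L H \<mu> P \<pi> \<omega> (Suc k) s'
        = (\<Sum>s\<in>UNIV. q k s * K s s' * (\<Sum>a\<in>UNIV. \<pi> (Suc k) s ?w a))"
      using Suc by (simp add: P_eq sum_distrib_left sum_distrib_right mult_ac)
    then show "sdist L H \<mu> P \<pi> \<omega> (Suc k) s' = q (Suc k) s'"
      using sum_policy[OF assms h] by (simp add: K_def)
  qed
qed

lemma state_marginal_distribution:
  "k < H \<Longrightarrow> (\<forall>s. 0 \<le> q k s) \<and> (\<Sum>s\<in>UNIV. q k s) = 1"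
proof (induction k)
  case 0
  then show ?case using mu_dist by simp
next
  case (Suc k)
  have h: "Suc k \<in> {1..H}" using Suc.prems by auto
  have IH: "\<forall>s. 0 \<le> q k s" "(\<Sum>s\<in>UNIV. q k s) = 1" using Suc by auto
  have "(\<Sum>s'\<in>UNIV. q (Suc k) s') = (\<Sum>s\<in>UNIV. q k s * (\<Sum>s'\<in>UNIV. P (Suc k) s undefined s'))"
    by (simp add: sum_distrib_left) (rule sum.swap)
  also have "\<dots> = 1" using P_dist h IH by simp
  moreover have "0 \<le> q (Suc k) s" for s
    using IH P_dist h by (simp add: sum_nonneg)
  ultimately show ?case by simp
qed

lemma state_marginal_nonneg: "h \<in> {1..H} \<Longrightarrow> 0 \<le> q (h - 1) s"
  using state_marginal_distribution[of "h - 1"] by auto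

lemma sum_state_marginal: "h \<in> {1..H} \<Longrightarrow> (\<Sum>s\<in>UNIV. q (h - 1) s) = 1"
  using state_marginal_distribution[of "h - 1"] by auto

lemma cond_value_eq:
  assumes "is_policy L H \<pi>"
  shows "cond_value L H \<mu> P \<pi> \<omega> = (\<Sum>h\<in>{1..H}. \<Sum>s\<in>UNIV. \<Sum>a\<in>UNIV.
      q (h - 1) s * \<pi> h s (restrict \<omega> (win L H h)) a * \<omega> h (s, a))"
  unfolding cond_value_def
  using sdist_eq_state_marginal[OF assms] by (intro sum.cong refl) auto

subsection \<open>The lower bound 1/A\<close>

definition greedy_value :: "(nat \<Rightarrow> 's \<times> 'a \<Rightarrow> real) \<Rightarrow> real" where
  "greedy_value r = (\<Sum>h\<in>{1..H}. \<Sum>s\<in>UNIV. q (h - 1) s * Max (range (\<lambda>a. r h (s, a))))"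

lemma policy_value_det_policy:
  assumes "D \<in> reward_dists H r"
  shows "policy_value L H \<mu> P D (det_policy g) = (\<Sum>h\<in>{1..H}. \<Sum>s\<in>UNIV. q (h - 1) s * r h (s, g h s))"
proof -
  have "cond_value L H \<mu> P (det_policy g) = (\<lambda>\<omega>. \<Sum>h\<in>{1..H}. \<Sum>s\<in>UNIV. \<Sum>a\<in>UNIV.
      (if a = g h s then q (h - 1) s else 0) * \<omega> h (s, a))"
    unfolding cond_value_eq[OF is_policy_det_policy]
    by (intro ext sum.cong refl) (simp add: det_policy_def)
  then have "policy_value L H \<mu> P D (det_policy g) = (\<Sum>h\<in>{1..H}. \<Sum>s\<in>UNIV. \<Sum>a\<in>UNIV.
      (if a = g h s then q (h - 1) s else 0) * r h (s, a))"
    unfolding policy_value_def by (simp only: integral_linear_reward[OF assms])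
  then show ?thesis
    by (simp add: if_distrib[of "\<lambda>x. x * _"] cong: if_cong)
qed

lemma greedy_value_le_opt_value:
  assumes "D \<in> reward_dists H r"
  shows "ereal (greedy_value r) \<le> opt_value L H \<mu> P D"
proof -
  have "\<exists>a. r h (s, a) = Max (range (\<lambda>a. r h (s, a)))" for h s
  proof -
    have "Max (range (\<lambda>a. r h (s, a))) \<in> range (\<lambda>a. r h (s, a))"
      by (rule Max_in) auto
    then show ?thesis by (metis imageE)
  qed
  then obtain g where "\<And>h s. r h (s, g h s) = Max (range (\<lambda>a. r h (s, a)))"
    by metis
  then have "policy_value L H \<mu> P D (det_policy g) = greedy_value r"
    unfolding policy_value_det_policy[OF assms] greedy_value_def by simp
  then show ?thesis
    unfolding opt_value_def using is_policy_det_policy by (intro SUP_upper2[of "det_policy g"]) auto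
qed

lemma greedy_value_nonneg:
  assumes "\<forall>h\<in>{1..H}. \<forall>x. 0 \<le> r h x"
  shows "0 \<le> greedy_value r"
  unfolding greedy_value_def
proof (intro sum_nonneg mult_nonneg_nonneg state_marginal_nonneg)
  fix h s assume "h \<in> {1..H}"
  then show "0 \<le> Max (range (\<lambda>a. r h (s, a)))"
    using assms by (intro Max_ge_iff[THEN iffD2]) auto
qed

lemma opt_value_nonneg:
  assumes "D \<in> reward_dists H r" and "\<forall>h\<in>{1..H}. \<forall>x. 0 \<le> r h x"
  shows "0 \<le> opt_value L H \<mu> P D"
  using order_trans[OF _ greedy_value_le_opt_value[OF assms(1)]] greedy_value_nonneg[OF assms(2)]
  by simp

lemma policy_value_le_sum_means:
  assumes D: "D \<in> reward_dists H r" and r: "\<forall>h\<in>{1..H}. \<forall>x. 0 \<le> r h x"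
    and \<pi>: "is_policy L H \<pi>"
  shows "policy_value L H \<mu> P D \<pi> \<le> (\<Sum>h\<in>{1..H}. \<Sum>s\<in>UNIV. \<Sum>a\<in>UNIV. q (h - 1) s * r h (s, a))"
proof (cases "integrable (PiM {1..H} D) (cond_value L H \<mu> P \<pi>)")
  case True
  have "AE \<omega> in PiM {1..H} D. \<forall>h\<in>{1..H}. \<forall>x. 0 \<le> \<omega> h x"
    by (intro eventually_ball_finite ballI AE_reward_component_nonneg[OF D]) auto
  then have "AE \<omega> in PiM {1..H} D. cond_value L H \<mu> P \<pi> \<omega>
      \<le> (\<Sum>h\<in>{1..H}. \<Sum>s\<in>UNIV. \<Sum>a\<in>UNIV. q (h - 1) s * \<omega> h (s, a))"
  proof eventually_elim
    case (elim \<omega>)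
    show ?case unfolding cond_value_eq[OF \<pi>]
    proof (intro sum_mono)
      fix h s a assume h: "h \<in> {1..H}"
      have "\<pi> h s (restrict \<omega> (win L H h)) a * \<omega> h (s, a) \<le> \<omega> h (s, a)"
        using elim h policy_le_1[OF \<pi> h] mult_right_mono[of _ 1] by fastforce
      then show "q (h - 1) s * \<pi> h s (restrict \<omega> (win L H h)) a * \<omega> h (s, a) \<le> q (h - 1) s * \<omega> h (s, a)"
        using mult_left_mono[OF _ state_marginal_nonneg[OF h]] by (simp add: mult.assoc)
    qed
  qed
  then show ?thesis
    unfolding policy_value_def integral_linear_reward[OF D, symmetric]
    by (rule integral_mono_AE[OF True integrable_linear_reward[OF D]])
next
  case False
  have "0 \<le> (\<Sum>h\<in>{1..H}. \<Sum>s\<in>UNIV. \<Sum>a\<in>UNIV. q (h - 1) s * r h (s, a))"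
    using r by (intro sum_nonneg mult_nonneg_nonneg state_marginal_nonneg) auto
  with False show ?thesis
    by (simp add: policy_value_def not_integrable_integral_eq)
qed

lemma opt_value_le_card_greedy_value:
  assumes D: "D \<in> reward_dists H r" and r: "\<forall>h\<in>{1..H}. \<forall>x. 0 \<le> r h x"
  shows "opt_value L H \<mu> P D \<le> ereal (real CARD('a) * greedy_value r)"
proof -
  have "(\<Sum>h\<in>{1..H}. \<Sum>s\<in>UNIV. \<Sum>a\<in>UNIV. q (h - 1) s * r h (s, a))
      \<le> (\<Sum>h\<in>{1..H}. \<Sum>s\<in>UNIV. \<Sum>a\<in>(UNIV::'a set). q (h - 1) s * Max (range (\<lambda>a. r h (s, a))))"
    by (intro sum_mono mult_left_mono state_marginal_nonneg) auto
  also have "\<dots> = real CARD('a) * greedy_value r"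
    unfolding greedy_value_def by (simp add: sum_distrib_left mult_ac)
  finally have "policy_value L H \<mu> P D \<pi> \<le> real CARD('a) * greedy_value r"
    if "is_policy L H \<pi>" for \<pi>
    using policy_value_le_sum_means[OF D r that] by linarith
  then show ?thesis
    unfolding opt_value_def by (intro SUP_least) auto
qed

lemma CR_r_ge_inverse_card:
  assumes r: "\<forall>h\<in>{1..H}. \<forall>x. 0 \<le> r h x \<and> r h x \<le> 1"
  shows "ereal (1 / real CARD('a)) \<le> CR_r L H \<mu> P r"
  unfolding CR_r_def
proof (rule INF_greatest)
  fix D assume D: "D \<in> reward_dists H r"
  have r_nonneg: "\<forall>h\<in>{1..H}. \<forall>x. 0 \<le> r h x" using r by blast
  show "ereal (1 / real CARD('a)) \<le> cr_div (opt_value 0 H \<mu> P D) (opt_value L H \<mu> P D)"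
    by (rule cr_div_ge_inverse[OF _ greedy_value_nonneg[OF r_nonneg] greedy_value_le_opt_value[OF D]
        opt_value_nonneg[OF D r_nonneg] opt_value_le_card_greedy_value[OF D r_nonneg]]) simp
qed

end

section \<open>The one-hot reward instance\<close>

definition one_hot :: "'a \<Rightarrow> ('s \<times> 'a \<Rightarrow> real)" where
  "one_hot b = (\<lambda>x. if snd x = b then 1 else 0)"

definition one_hot_rewards :: "nat \<Rightarrow> ('s \<times> 'a::finite \<Rightarrow> real) measure" where
  "one_hot_rewards h = distr (measure_pmf (pmf_of_set UNIV)) rew_space one_hot"

lemma measurable_one_hot:
  "one_hot \<in> measurable (measure_pmf (pmf_of_set (UNIV::'a::finite set))) rew_space"
  by simp

lemma AE_one_hot_rewards:
  assumes "Measurable.pred rew_space Q" and "\<And>b. Q (one_hot b)"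
  shows "AE \<rho> in one_hot_rewards h. Q \<rho>"
proof -
  have "{\<rho> \<in> space rew_space. Q \<rho>} \<in> sets rew_space"
    using assms(1) by (simp only: pred_def)
  from AE_distr_iff[OF measurable_one_hot this] show ?thesis
    unfolding one_hot_rewards_def using assms(2) by simp
qed

lemma one_hot_rewards_in_reward_dists:
  "(one_hot_rewards :: nat \<Rightarrow> ('s::finite \<times> 'a::finite \<Rightarrow> real) measure)
     \<in> reward_dists H (\<lambda>h x. 1 / real CARD('a))"
  unfolding reward_dists_def
proof (intro CollectI ballI conjI allI)
  fix h :: nat and x :: "'s \<times> 'a"
  show "prob_space (one_hot_rewards h :: ('s \<times> 'a \<Rightarrow> real) measure)"
    unfolding one_hot_rewards_def by (rule measure_pmf.prob_space_distr[OF measurable_one_hot])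
  show "sets (one_hot_rewards h :: ('s \<times> 'a \<Rightarrow> real) measure) = sets rew_space"
    unfolding one_hot_rewards_def by simp
  show "AE \<rho> in (one_hot_rewards h :: ('s \<times> 'a \<Rightarrow> real) measure). \<forall>x. 0 \<le> \<rho> x"
    by (rule AE_one_hot_rewards) (auto simp: rew_space_def one_hot_def)
  show "integrable (one_hot_rewards h :: ('s \<times> 'a \<Rightarrow> real) measure) (\<lambda>\<rho>. \<rho> x)"
    unfolding one_hot_rewards_def
    by (subst integrable_distr_eq[OF measurable_one_hot]) (simp_all add: integrable_measure_pmf_finite)
  show "(\<integral>\<rho>. \<rho> x \<partial>(one_hot_rewards h :: ('s \<times> 'a \<Rightarrow> real) measure)) = 1 / real CARD('a)"
    unfolding one_hot_rewards_def
    by (subst integral_distr[OF measurable_one_hot]) (simp_all add: integral_pmf_of_set one_hot_def)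
qed

lemma AE_PiM_one_hot_rewards:
  "AE \<omega> in PiM {1..H} (one_hot_rewards :: nat \<Rightarrow> ('s::finite \<times> 'a::finite \<Rightarrow> real) measure).
     \<forall>h\<in>{1..H}. \<omega> h \<in> range one_hot"
proof (intro eventually_ball_finite ballI AE_PiM_component)
  fix h
  have "Measurable.pred rew_space (\<lambda>\<rho>::'s \<times> 'a \<Rightarrow> real. \<exists>b\<in>UNIV. \<forall>x\<in>UNIV. \<rho> x = one_hot b x)"
    unfolding rew_space_def by measurable
  then have "Measurable.pred rew_space (\<lambda>\<rho>::'s \<times> 'a \<Rightarrow> real. \<rho> \<in> range one_hot)"
    by (simp add: image_iff fun_eq_iff)
  then show "AE \<rho> in one_hot_rewards h. \<rho> \<in> range (one_hot :: 'a \<Rightarrow> 's \<times> 'a \<Rightarrow> real)"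
    by (rule AE_one_hot_rewards) simp
qed (use reward_distsD(1)[OF one_hot_rewards_in_reward_dists] in auto)

text \<open>Normalising the observed rewards (uniformly when they all vanish) yields a measurable
  policy which, on one-hot rewards, plays the paying action.\<close>

definition normalized_reward :: "('s \<times> 'a::finite \<Rightarrow> real) \<Rightarrow> 's \<Rightarrow> 'a \<Rightarrow> real" where
  "normalized_reward \<rho> s a = (if (\<Sum>a'\<in>UNIV. \<bar>\<rho> (s, a')\<bar>) = 0 then 1 / real CARD('a)
     else \<bar>\<rho> (s, a)\<bar> / (\<Sum>a'\<in>UNIV. \<bar>\<rho> (s, a')\<bar>))"

definition reward_following_policy :: "('s, 'a::finite) policy" where
  "reward_following_policy h s w a = normalized_reward (w h) s a"

lemma normalized_reward_one_hot:
  "normalized_reward (one_hot b) s a * one_hot b (s, a) = (if a = b then 1 else 0)"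
  by (simp add: normalized_reward_def one_hot_def)

lemma is_policy_reward_following_policy:
  assumes "1 \<le> L"
  shows "is_policy L H (reward_following_policy :: ('s::finite, 'a::finite) policy)"
  unfolding is_policy_def
proof (intro ballI allI conjI)
  fix h and s :: 's and w and a :: 'a
  show "0 \<le> reward_following_policy h s w a"
    unfolding reward_following_policy_def normalized_reward_def by (auto intro!: sum_nonneg)
  show "(\<Sum>a\<in>UNIV. reward_following_policy h s w a) = 1"
    unfolding reward_following_policy_def normalized_reward_def
    by (cases "(\<Sum>a'\<in>UNIV. \<bar>w h (s, a')\<bar>) = 0") (simp_all add: sum_divide_distrib[symmetric])
next
  fix h and s :: 's and a :: 'a assume "h \<in> {1..H}"
  then have "h \<in> win L H h" using assms unfolding win_def by auto
  then have [measurable]: "(\<lambda>w. w h) \<in> measurable (PiM (win L H h) (\<lambda>_. rew_space)) rew_space"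
    by (rule measurable_component_singleton)
  show "(\<lambda>w. reward_following_policy h s w a) \<in> borel_measurable (PiM (win L H h) (\<lambda>_. rew_space))"
    unfolding reward_following_policy_def normalized_reward_def by measurable
qed

context action_independent_mdp
begin

lemma opt_value_no_lookahead_one_hot:
  "opt_value 0 H \<mu> P one_hot_rewards \<le> ereal (real H / real CARD('a))"
  unfolding opt_value_def
proof (rule SUP_least, clarify)
  fix \<pi> assume \<pi>: "is_policy 0 H (\<pi> :: ('s, 'a) policy)"
  let ?w = "\<lambda>_. undefined :: 's \<times> 'a \<Rightarrow> real"
  have cond_value: "cond_value 0 H \<mu> P \<pi> = (\<lambda>\<omega>. \<Sum>h\<in>{1..H}. \<Sum>s\<in>UNIV. \<Sum>a\<in>UNIV.
      (q (h - 1) s * \<pi> h s ?w a) * \<omega> h (s, a))"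
    unfolding cond_value_eq[OF \<pi>] by (intro ext sum.cong refl) (simp add: win_def restrict_def)
  have "policy_value 0 H \<mu> P one_hot_rewards \<pi>
      = (\<Sum>h\<in>{1..H}. \<Sum>s\<in>UNIV. \<Sum>a\<in>UNIV. (q (h - 1) s * \<pi> h s ?w a) * (1 / real CARD('a)))"
    unfolding policy_value_def cond_value
    by (rule integral_linear_reward[OF one_hot_rewards_in_reward_dists])
  also have "\<dots> = (\<Sum>h\<in>{1..H}. \<Sum>s\<in>UNIV. q (h - 1) s * (\<Sum>a\<in>UNIV. \<pi> h s ?w a) / real CARD('a))"
    by (simp add: sum_distrib_left sum_divide_distrib)
  also have "\<dots> = (\<Sum>h\<in>{1..H}. 1 / real CARD('a))"
  proof (intro sum.cong refl)
    fix h assume h: "h \<in> {1..H}"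
    show "(\<Sum>s\<in>UNIV. q (h - 1) s * (\<Sum>a\<in>UNIV. \<pi> h s ?w a) / real CARD('a)) = 1 / real CARD('a)"
      using sum_state_marginal[OF h]
      by (simp add: sum_policy[OF \<pi> h] sum_divide_distrib[symmetric])
  qed
  finally show "ereal (policy_value 0 H \<mu> P one_hot_rewards \<pi>) \<le> ereal (real H / real CARD('a))"
    by simp
qed

lemma cond_value_reward_following_policy:
  assumes "1 \<le> L"
  shows "cond_value L H \<mu> P reward_following_policy \<omega> = (\<Sum>h\<in>{1..H}. \<Sum>s\<in>UNIV. \<Sum>a\<in>UNIV.
      q (h - 1) s * normalized_reward (\<omega> h) s a * \<omega> h (s, a))"
  unfolding cond_value_eq[OF is_policy_reward_following_policy[OF assms]] reward_following_policy_def
  using assms by (intro sum.cong refl) (simp add: win_def)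

lemma cond_value_reward_following_policy_one_hot:
  assumes "1 \<le> L" and one_hot: "\<forall>h\<in>{1..H}. \<omega> h \<in> range one_hot"
  shows "cond_value L H \<mu> P reward_following_policy \<omega> = real H"
proof -
  have "cond_value L H \<mu> P reward_following_policy \<omega> = (\<Sum>h\<in>{1..H}. \<Sum>s\<in>UNIV. q (h - 1) s)"
    unfolding cond_value_reward_following_policy[OF assms(1)]
  proof (intro sum.cong refl)
    fix h s assume "h \<in> {1..H}"
    then obtain b where b: "\<omega> h = one_hot b" using one_hot by blast
    show "(\<Sum>a\<in>UNIV. q (h - 1) s * normalized_reward (\<omega> h) s a * \<omega> h (s, a)) = q (h - 1) s"
      unfolding b
      by (simp add: mult.assoc normalized_reward_one_hot if_distrib[of "\<lambda>x. _ * x"] cong: if_cong)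
  qed
  also have "\<dots> = (\<Sum>h\<in>{1..H}. 1)"
    by (intro sum.cong refl sum_state_marginal)
  finally show ?thesis by simp
qed

lemma measurable_cond_value_reward_following_policy:
  assumes "1 \<le> L"
  shows "cond_value L H \<mu> P reward_following_policy
    \<in> borel_measurable (PiM {1..H} (one_hot_rewards :: nat \<Rightarrow> ('s \<times> 'a \<Rightarrow> real) measure))"
proof -
  let ?M = "PiM {1..H} (one_hot_rewards :: nat \<Rightarrow> ('s \<times> 'a \<Rightarrow> real) measure)"
  have "(\<lambda>\<omega>. q (h - 1) s * normalized_reward (\<omega> h) s a * \<omega> h (s, a)) \<in> borel_measurable ?M"
    if h: "h \<in> {1..H}" for h s a
  proof -
    have [measurable]: "(\<lambda>\<omega>. \<omega> h x) \<in> borel_measurable ?M" for x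
      by (rule measurable_reward_component[OF one_hot_rewards_in_reward_dists h])
    show ?thesis unfolding normalized_reward_def by measurable
  qed
  then have "(\<lambda>\<omega>. \<Sum>h\<in>{1..H}. \<Sum>s\<in>UNIV. \<Sum>a\<in>UNIV.
      q (h - 1) s * normalized_reward (\<omega> h) s a * \<omega> h (s, a)) \<in> borel_measurable ?M"
    by (intro borel_measurable_sum) auto
  then show ?thesis
    by (subst ext[OF cond_value_reward_following_policy[OF assms]])
qed

lemma opt_value_lookahead_one_hot:
  assumes L: "1 \<le> L"
  shows "ereal (real H) \<le> opt_value L H \<mu> P (one_hot_rewards :: nat \<Rightarrow> ('s \<times> 'a \<Rightarrow> real) measure)"
proof -
  let ?M = "PiM {1..H} (one_hot_rewards :: nat \<Rightarrow> ('s \<times> 'a \<Rightarrow> real) measure)"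
  interpret prob_space ?M
    by (intro prob_space_PiM reward_distsD(1)[OF one_hot_rewards_in_reward_dists])
  have "AE \<omega> in ?M. cond_value L H \<mu> P reward_following_policy \<omega> = real H"
    using AE_PiM_one_hot_rewards[of H]
    by eventually_elim (rule cond_value_reward_following_policy_one_hot[OF L])
  then have "policy_value L H \<mu> P one_hot_rewards reward_following_policy = integral\<^sup>L ?M (\<lambda>_. real H)"
    unfolding policy_value_def
    by (intro integral_cong_AE measurable_cond_value_reward_following_policy[OF L]) simp_all
  also have "\<dots> = real H"
    using prob_space by simp
  finally show ?thesis
    unfolding opt_value_def using is_policy_reward_following_policy[OF L]
    by (intro SUP_upper2[of reward_following_policy]) auto
qed

lemma CR_r_one_hot_le_inverse_card:
  assumes "L \<in> {1..H}"
  shows "CR_r L H \<mu> P (\<lambda>h x. 1 / real CARD('a)) \<le> ereal (1 / real CARD('a))"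
  unfolding CR_r_def
proof (rule INF_lower2[OF one_hot_rewards_in_reward_dists])
  show "cr_div (opt_value 0 H \<mu> P one_hot_rewards) (opt_value L H \<mu> P one_hot_rewards)
      \<le> ereal (1 / real CARD('a))"
    using assms
    by (intro cr_div_le_inverse[where X = "real H"] opt_value_no_lookahead_one_hot
        opt_value_lookahead_one_hot opt_value_nonneg[OF one_hot_rewards_in_reward_dists]) auto
qed

end

theorem mainTheorem7:
  fixes \<mu> :: "'s::finite \<Rightarrow> real"
    and P :: "nat \<Rightarrow> 's \<Rightarrow> 'a::finite \<Rightarrow> 's \<Rightarrow> real"
    and H L :: nat
  assumes mu_dist: "(\<forall>s. 0 \<le> \<mu> s) \<and> (\<Sum>s\<in>UNIV. \<mu> s) = 1"
    and P_dist: "\<forall>h\<in>{1..H}. \<forall>s a. (\<forall>s'. 0 \<le> P h s a s') \<and> (\<Sum>s'\<in>UNIV. P h s a s') = 1"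
    and P_action_indep: "\<forall>h\<in>{1..H}. \<forall>s a a' s'. P h s a s' = P h s a' s'"
    and L_range: "L \<in> {1..H}"
  shows "CR L H \<mu> P = ereal (1 / real CARD('a))"
proof -
  interpret action_independent_mdp \<mu> P H
    using mu_dist P_dist P_action_indep by unfold_locales
  show ?thesis
    unfolding CR_def
  proof (rule antisym)
    show "(INF r\<in>{r. \<forall>h\<in>{1..H}. \<forall>x. 0 \<le> r h x \<and> r h x \<le> 1}. CR_r L H \<mu> P r)
        \<le> ereal (1 / real CARD('a))"
      using CR_r_one_hot_le_inverse_card[OF L_range]
      by (intro INF_lower2[of "\<lambda>h x. 1 / real CARD('a)"]) auto
    show "ereal (1 / real CARD('a))
        \<le> (INF r\<in>{r. \<forall>h\<in>{1..H}. \<forall>x. 0 \<le> r h x \<and> r h x \<le> 1}. CR_r L H \<mu> P r)"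
      using CR_r_ge_inverse_card by (intro INF_greatest) auto
  qed
qed

end
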